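(* Let $\tau\in\mathcal T_1$ and $t>0$ with $2/t$ not a positive integer. If $\psi$ is an Ad-invariant distribution on $SU(2)$ such that $z\mapsto|C^\tau_t(\psi)(d(z))|^2|\sigma(z)|^2\exp(-\frac{4\pi}{t\tau_2}(\mathrm{Im}\,z)^2)$ is invariant under $z\mapsto z+\tau$, then $\psi=0$.
   Context: $d(z)=\mathrm{diag}(e^{2\pi iz},e^{-2\pi iz})$, $\sigma(z)=e^{2\pi iz}-e^{-2\pi iz}$. $\chi_m$ ($m\ge0$) the character of the $(m+1)$-dimensional irreducible representation of $SU(2)$, $c_m=((m+1)^2-1)/2$. Ad-invariant distribution: formal series $\psi=\sum_{m\ge0}a_m\chi_m$ with $|a_m|(1+m^2)^{-N}\to0$ for some $N$. $\mathcal T_1=\{\mathrm{Im}\,\tau>0\}$, $\tau_2=\mathrm{Im}\,\tau$, $C^\tau_t(\psi)(g)=\sum_ma_me^{i\pi\tau tc_m}\chi_m(g)$, $g\in SL(2,\mathbb C)$. *)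

theory Defs
  imports "HOL-Analysis.Analysis"
begin

definition dmat :: "complex \<Rightarrow> complex^2^2" where
  "dmat z = (\<chi> i j. if i = j then (if i = 1 then exp (2*pi*\<i>*z) else exp (-(2*pi*\<i>*z))) else 0)"

definition sigma :: "complex \<Rightarrow> complex" where
  "sigma z = exp (2*pi*\<i>*z) - exp (-(2*pi*\<i>*z))"

definition mtrace :: "complex^2^2 \<Rightarrow> complex" where
  "mtrace A = (\<Sum>i\<in>UNIV. A $ i $ i)"

text \<open>Characters of the irreducible (m+1)-dimensional representations of SL(2,C)
  (holomorphic extensions of the SU(2) characters), via the Clebsch--Gordan
  recursion chi_1 * chi_m = chi_(m+1) + chi_(m-1), chi_1 = trace.\<close>
fun chi :: "nat \<Rightarrow> complex^2^2 \<Rightarrow> complex" where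
  "chi 0 g = 1"
| "chi (Suc 0) g = mtrace g"
| "chi (Suc (Suc m)) g = mtrace g * chi (Suc m) g - chi m g"

definition cm :: "nat \<Rightarrow> real" where
  "cm m = ((real m + 1)^2 - 1) / 2"

text \<open>Ad-invariant distribution psi = sum a_m chi_m, given by its coefficient sequence.\<close>
definition ad_inv_distribution :: "(nat \<Rightarrow> complex) \<Rightarrow> bool" where
  "ad_inv_distribution a \<longleftrightarrow>
     (\<exists>N::nat. ((\<lambda>m. norm (a m) * (1 + (real m)^2) powi (- int N)) \<longlonglongrightarrow> 0))"

definition Ctau :: "complex \<Rightarrow> real \<Rightarrow> (nat \<Rightarrow> complex) \<Rightarrow> complex^2^2 \<Rightarrow> complex" where
  "Ctau \<tau> t a g = (\<Sum>m. a m * exp (\<i> * pi * \<tau> * t * cm m) * chi m g)"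

end

(*
  Put F z = sigma z * C(d z). Weyl's character formula gives F z = P q - P (1/q) with
  q = e^(2 pi i z) for a power series P whose coefficients decay like a Gaussian, so F is entire
  and 1-periodic. Completing the square in the Gaussian weight, the hypothesis says that F (z + tau)
  and F z * e^(-4 pi i z / t) have proportional moduli; by the maximum modulus principle the two
  entire functions are then proportional. Shifting by 1 multiplies the right-hand side by
  e^(-4 pi i / t), which is not 1 since 2/t is not a positive integer, while it leaves the
  left-hand side unchanged; hence F = 0. Then P (q) = P (1/q), so P is bounded, hence constant by
  Liouville's theorem, and since P 0 = 0 all of its coefficients, i.e. all a m, vanish.
*)

theory Submission
  imports Defs "HOL-Complex_Analysis.Complex_Analysis" "HOL-Real_Asymp.Real_Asymp"
begin

lemma summable_powser_gaussian_coeffs: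
  fixes b :: "nat \<Rightarrow> 'a::{real_normed_div_algebra,banach}"
  assumes "\<alpha> > 0" and b_le: "\<And>n. norm (b n) \<le> B * (1 + real n ^ 2) ^ N * exp (- \<alpha> * real n ^ 2)"
  shows "summable (\<lambda>n. b n * w ^ n)"
proof -
  define g where "g n = (1 + real n ^ 2) ^ N * norm w ^ n * exp (- \<alpha> * real n ^ 2)" for n
  define r where
    "r n = ((1 + (real n + 1) ^ 2) / (1 + real n ^ 2)) ^ N * norm w * exp (- \<alpha> * (2 * real n + 1))"
    for n
  have g_Suc: "g (Suc n) = r n * g n" for n
  proof -
    have "exp (- \<alpha> * (real n + 1) ^ 2) = exp (- \<alpha> * (2 * real n + 1)) * exp (- \<alpha> * real n ^ 2)"
      by (simp add: exp_add[symmetric] power2_eq_square algebra_simps)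
    moreover have "1 + real n ^ 2 > 0"
      by (simp add: add_pos_nonneg)
    ultimately show ?thesis
      unfolding g_def r_def by (simp add: power_divide field_simps)
  qed
  have "(\<lambda>n. (1 + (real n + 1) ^ 2) / (1 + real n ^ 2)) \<longlonglongrightarrow> 1"
    by real_asymp
  moreover have "(\<lambda>n. exp (- \<alpha> * (2 * real n + 1))) \<longlonglongrightarrow> 0"
    using \<open>\<alpha> > 0\<close> by real_asymp
  ultimately have "r \<longlonglongrightarrow> 1 ^ N * norm w * 0"
    unfolding r_def by (intro tendsto_intros)
  then have "eventually (\<lambda>n. r n < 1/2) sequentially"
    by (intro order_tendstoD) auto
  then obtain n0 where r_small: "\<And>n. n \<ge> n0 \<Longrightarrow> r n < 1/2"
    by (auto simp: eventually_sequentially)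
  have "summable g"
  proof (rule summable_ratio_test[of "1/2" n0])
    fix n assume "n \<ge> n0"
    moreover have "r n \<ge> 0" "g n \<ge> 0"
      unfolding r_def g_def by (simp_all add: add_nonneg_nonneg)
    ultimately show "norm (g (Suc n)) \<le> 1/2 * norm (g n)"
      using r_small[of n] mult_right_mono[of "r n" "1/2" "g n"] by (simp add: g_Suc)
  qed simp
  show ?thesis
  proof (rule summable_comparison_test'[OF summable_mult[OF \<open>summable g\<close>, of B]])
    fix n
    have "norm (b n * w ^ n) = norm (b n) * norm w ^ n"
      by (simp add: norm_mult norm_power)
    also have "\<dots> \<le> B * g n"
      using mult_right_mono[OF b_le[of n], of "norm w ^ n"] by (simp add: g_def mult_ac)
    finally show "norm (b n * w ^ n) \<le> B * g n" .
  qed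
qed

lemma ad_inv_distribution_polynomial_bound:
  assumes "ad_inv_distribution a"
  obtains K N where "K \<ge> 0" "\<And>m. norm (a m) \<le> K * (1 + real m ^ 2) ^ N"
proof -
  obtain N :: nat where "(\<lambda>m. norm (a m) * (1 + real m ^ 2) powi (- int N)) \<longlonglongrightarrow> 0"
    using assms unfolding ad_inv_distribution_def by blast
  then have "Bseq (\<lambda>m. norm (a m) / (1 + real m ^ 2) ^ N)"
    by (intro convergent_imp_Bseq convergentI) (simp add: power_int_minus divide_inverse)
  then obtain K where "K > 0" and K: "\<And>m. norm (a m) / (1 + real m ^ 2) ^ N \<le> K"
    unfolding Bseq_def by auto
  have "norm (a m) \<le> K * (1 + real m ^ 2) ^ N" for m
    using K[of m] by (simp add: add_pos_nonneg pos_divide_le_eq)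
  then show ?thesis
    using that[of K N] \<open>K > 0\<close> by simp
qed

lemma chi_Weyl_formula:
  "mtrace g = q + p \<Longrightarrow> q * p = 1 \<Longrightarrow> (q - p) * chi m g = q ^ Suc m - p ^ Suc m"
proof (induction m g rule: chi.induct)
  case (3 m g)
  have "(q - p) * chi (Suc (Suc m)) g = (q + p) * ((q - p) * chi (Suc m) g) - (q - p) * chi m g"
    using 3 by (simp add: algebra_simps)
  also have "\<dots> = (q + p) * (q ^ Suc (Suc m) - p ^ Suc (Suc m)) - (q ^ Suc m - p ^ Suc m)"
    using 3 by simp
  also have "\<dots> = q ^ Suc (Suc (Suc m)) - p ^ Suc (Suc (Suc m))
                   + (q * p - 1) * (q ^ Suc m - p ^ Suc m)"
    by (simp add: algebra_simps)
  finally show ?case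
    using 3 by simp
qed (simp_all add: algebra_simps power2_eq_square)

lemma mtrace_dmat: "mtrace (dmat z) = exp (2*pi*\<i>*z) + exp (-(2*pi*\<i>*z))"
  by (simp add: mtrace_def dmat_def sum_2)

lemma entire_proportional_if_norm_eq:
  fixes f g :: "complex \<Rightarrow> complex"
  assumes f: "f holomorphic_on UNIV" and g: "g holomorphic_on UNIV"
    and norm_eq: "\<And>z. norm (f z) = norm (g z)"
  obtains c where "\<And>z. f z = c * g z"
proof (cases "\<forall>z. g z = 0")
  case True
  then show ?thesis
    using that[of 0] norm_eq by simp
next
  case False
  then obtain z0 where "g z0 \<noteq> 0"
    by blast
  moreover have "continuous (at z0) g"
    using holomorphic_on_imp_differentiable_at[OF g] field_differentiable_imp_continuous_at by blast
  ultimately obtain r where "r > 0" and g_nz: "\<And>y. dist z0 y < r \<Longrightarrow> g y \<noteq> 0"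
    using continuous_at_avoid by blast
  have "(\<lambda>w. f w / g w) holomorphic_on ball z0 r"
    using g_nz by (intro holomorphic_on_divide holomorphic_on_subset[OF f] holomorphic_on_subset[OF g]) auto
  moreover have "norm (f w / g w) = 1" if "w \<in> ball z0 r" for w
    using g_nz[of w] that norm_eq[of w] by (simp add: norm_divide)
  ultimately have "(\<lambda>w. f w / g w) constant_on ball z0 r"
    using \<open>r > 0\<close> by (intro maximum_modulus_principle[where U = "ball z0 r" and \<xi> = z0]) auto
  then obtain c where c: "\<And>w. w \<in> ball z0 r \<Longrightarrow> f w / g w = c"
    unfolding constant_on_def by blast
  have "f z = c * g z" for z
  proof (rule analytic_continuation_open[of "ball z0 r" UNIV f "\<lambda>z. c * g z"])
    show "f w = c * g w" if "w \<in> ball z0 r" for w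
      using c[OF that] g_nz[of w] that by (simp add: field_simps)
  qed (use \<open>r > 0\<close> f g in \<open>auto intro: holomorphic_intros\<close>)
  then show ?thesis
    using that by blast
qed

lemma norm_shift_eq_if_gaussian_weighted_invariant:
  fixes f :: "complex \<Rightarrow> complex"
  assumes "\<And>z. norm (f (z + \<tau>))^2 * exp (- k * Im (z + \<tau>)^2) = norm (f z)^2 * exp (- k * Im z ^ 2)"
  shows "norm (f (z + \<tau>)) = norm (f z * exp (- (\<i> * of_real (k * Im \<tau>)) * z + of_real (k * Im \<tau> ^ 2 / 2)))"
proof -
  define E where "E = exp (k * Im \<tau> * Im z + k * Im \<tau> ^ 2 / 2)"
  \<comment> \<open>completing the square in the Gaussian weight\<close>
  have "- k * Im (z + \<tau>)^2 + 2 * (k * Im \<tau> * Im z + k * Im \<tau> ^ 2 / 2) = - k * Im z ^ 2"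
    by (simp add: power2_eq_square algebra_simps)
  then have "exp (- k * Im (z + \<tau>)^2) * E^2 = exp (- k * Im z ^ 2)"
    by (simp add: E_def power2_eq_square flip: exp_add)
  then have "norm (f (z + \<tau>))^2 * exp (- k * Im (z + \<tau>)^2) = (norm (f z) * E)^2 * exp (- k * Im (z + \<tau>)^2)"
    using assms[of z] by (simp add: power_mult_distrib mult_ac)
  then have "norm (f (z + \<tau>))^2 = (norm (f z) * E)^2"
    by simp
  then have "norm (f (z + \<tau>)) = norm (f z) * E"
    by (simp add: E_def power2_eq_iff_nonneg)
  then show ?thesis
    by (simp add: E_def norm_mult)
qed

lemma entire_gaussian_invariant_imp_quasiperiodic:
  fixes f :: "complex \<Rightarrow> complex"
  assumes f: "f holomorphic_on UNIV"
    and "\<And>z. norm (f (z + \<tau>))^2 * exp (- k * Im (z + \<tau>)^2) = norm (f z)^2 * exp (- k * Im z ^ 2)"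
  obtains c where
    "\<And>z. f (z + \<tau>) = c * (f z * exp (- (\<i> * of_real (k * Im \<tau>)) * z + of_real (k * Im \<tau> ^ 2 / 2)))"
proof -
  have "(\<lambda>z. f (z + \<tau>)) holomorphic_on UNIV"
    using holomorphic_on_compose[of "\<lambda>z. z + \<tau>" UNIV f] f by (simp add: o_def holomorphic_intros)
  moreover have "(\<lambda>z. f z * exp (- (\<i> * of_real (k * Im \<tau>)) * z + of_real (k * Im \<tau> ^ 2 / 2)))
      holomorphic_on UNIV"
    using f by (intro holomorphic_intros)
  ultimately show ?thesis
    using entire_proportional_if_norm_eq norm_shift_eq_if_gaussian_weighted_invariant[OF assms(2)] that
    by blast
qed

lemma periodic_quasiperiodic_eq_0:
  fixes f :: "complex \<Rightarrow> complex"
  assumes periodic: "\<And>z. f (z + 1) = f z"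
    and quasiperiodic: "\<And>z. f (z + \<tau>) = c * (f z * exp (\<beta> * z + \<gamma>))"
    and "exp \<beta> \<noteq> 1"
  shows "f z = 0"
proof -
  have "f (w + \<tau>) = 0" for w
  proof -
    have "f (w + \<tau>) = f ((w + 1) + \<tau>)"
      using periodic[of "w + \<tau>"] by (simp add: add_ac)
    also have "\<dots> = f (w + \<tau>) * exp \<beta>"
      by (simp add: quasiperiodic periodic distrib_left exp_add mult_ac)
    finally have "f (w + \<tau>) * (exp \<beta> - 1) = 0"
      by (simp add: algebra_simps)
    then show ?thesis
      using \<open>exp \<beta> \<noteq> 1\<close> by simp
  qed
  from this[of "z - \<tau>"] show ?thesis
    by simp
qed

lemma exp_4pi_div_ne_1:
  assumes "t > 0" and "\<not> (\<exists>n::nat. n > 0 \<and> 2 / t = real n)"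
  shows "exp (- (\<i> * of_real (4 * pi / t))) \<noteq> 1"
proof
  assume "exp (- (\<i> * of_real (4 * pi / t))) = 1"
  then obtain n :: int where "- (4 * pi / t) = of_int (2 * n) * pi"
    by (auto simp: exp_eq_1)
  then have "pi * (t * of_int n) = pi * (- 2)"
    using \<open>t > 0\<close> by (simp add: field_simps)
  then have "t * of_int n = - 2"
    using pi_neq_zero mult_left_cancel by blast
  then have "2 / t = - of_int n"
    using \<open>t > 0\<close> by (simp add: field_simps)
  moreover have "2 / t > 0"
    using \<open>t > 0\<close> by simp
  ultimately have "nat (- n) > 0 \<and> 2 / t = real (nat (- n))"
    by simp
  with assms(2) show False
    by blast
qed

lemma entire_inversion_invariant_imp_const:
  fixes f :: "complex \<Rightarrow> complex"
  assumes f: "f holomorphic_on UNIV" and inv: "\<And>q. q \<noteq> 0 \<Longrightarrow> f (inverse q) = f q"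
  shows "f w = f 0"
proof -
  have "range f \<subseteq> f ` cball 0 1"
  proof (rule image_subsetI)
    fix u
    show "f u \<in> f ` cball 0 1"
    proof (cases "norm u \<le> 1")
      case False
      then have "u \<noteq> 0"
        by auto
      with False have "f u = f (inverse u)" and "inverse u \<in> cball 0 1"
        using inv[of u] by (auto simp: norm_inverse inverse_le_1_iff)
      then show ?thesis
        by blast
    qed simp
  qed
  moreover have "compact (f ` cball 0 1)"
    using f by (intro compact_continuous_image holomorphic_on_imp_continuous_on)
      (auto intro: holomorphic_on_subset)
  ultimately have "bounded (range f)"
    using compact_imp_bounded bounded_subset by blast
  then show ?thesis
    using Liouville_theorem[OF f] by (auto simp: constant_on_def)
qed

lemma powser_eq_0_imp_coeff_eq_0:
  fixes b :: "nat \<Rightarrow> complex"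
  assumes "\<And>x. (\<lambda>n. b n * x ^ n) sums 0"
  shows "b n = 0"
proof (cases n)
  case 0
  then show ?thesis
    using assms[of 0] by simp
next
  case (Suc m)
  show ?thesis
  proof (rule ccontr)
    assume "b n \<noteq> 0"
    show False
    proof (rule powser_0_nonzero[of 1 0 b "\<lambda>_. 0" n])
      fix s :: real
      assume "s > 0" and "\<And>z. z \<in> cball (0::complex) s - {0} \<Longrightarrow> (0::complex) \<noteq> 0"
      from this(2)[of "of_real s"] \<open>s > 0\<close> show False
        by simp
    qed (use assms Suc \<open>b n \<noteq> 0\<close> in auto)
  qed
qed

text \<open>The coefficient of w^(m+1) in ctau_powser is the coefficient of chi m in Ctau: by Weyl's
  character formula chi m (dmat z) = (q^(m+1) - q^-(m+1)) / (q - 1/q) for q = e^(2 pi i z).\<close>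

definition ctau_coeff :: "complex \<Rightarrow> real \<Rightarrow> (nat \<Rightarrow> complex) \<Rightarrow> nat \<Rightarrow> complex" where
  "ctau_coeff \<tau> t a n = (if n = 0 then 0 else a (n - 1) * exp (\<i> * pi * \<tau> * t * cm (n - 1)))"

definition ctau_powser :: "complex \<Rightarrow> real \<Rightarrow> (nat \<Rightarrow> complex) \<Rightarrow> complex \<Rightarrow> complex" where
  "ctau_powser \<tau> t a w = (\<Sum>n. ctau_coeff \<tau> t a n * w ^ n)"

definition weyl_numerator :: "complex \<Rightarrow> real \<Rightarrow> (nat \<Rightarrow> complex) \<Rightarrow> complex \<Rightarrow> complex" where
  "weyl_numerator \<tau> t a z =
     ctau_powser \<tau> t a (exp (2*pi*\<i>*z)) - ctau_powser \<tau> t a (exp (-(2*pi*\<i>*z)))"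

lemma norm_ctau_coeff_le:
  assumes "ad_inv_distribution a"
  obtains B N where
    "\<And>n. norm (ctau_coeff \<tau> t a n) \<le> B * (1 + real n ^ 2) ^ N * exp (- (pi * Im \<tau> * t / 2) * real n ^ 2)"
proof -
  obtain K N where "K \<ge> 0" and K: "\<And>m. norm (a m) \<le> K * (1 + real m ^ 2) ^ N"
    using ad_inv_distribution_polynomial_bound[OF assms] by blast
  define \<alpha> where "\<alpha> = pi * Im \<tau> * t / 2"
  have "norm (ctau_coeff \<tau> t a n) \<le> (K * exp \<alpha>) * (1 + real n ^ 2) ^ N * exp (- \<alpha> * real n ^ 2)" for n
  proof (cases n)
    case 0
    then show ?thesis
      using \<open>K \<ge> 0\<close> by (simp add: ctau_coeff_def)
  next
    case (Suc m)
    have "pi * Im \<tau> * t * cm m = \<alpha> * real n ^ 2 - \<alpha>"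
      unfolding cm_def \<alpha>_def Suc by (simp add: power2_eq_square algebra_simps)
    then have "norm (ctau_coeff \<tau> t a n) = norm (a m) * (exp \<alpha> * exp (- \<alpha> * real n ^ 2))"
      by (simp add: ctau_coeff_def Suc norm_mult exp_add[symmetric])
    also have "\<dots> \<le> K * (1 + real m ^ 2) ^ N * (exp \<alpha> * exp (- \<alpha> * real n ^ 2))"
      by (rule mult_right_mono[OF K]) simp
    also have "\<dots> \<le> K * (1 + real n ^ 2) ^ N * (exp \<alpha> * exp (- \<alpha> * real n ^ 2))"
      using \<open>K \<ge> 0\<close> unfolding Suc by (intro mult_right_mono mult_left_mono power_mono) auto
    finally show ?thesis
      by (simp add: mult_ac)
  qed
  then show ?thesis
    using that unfolding \<alpha>_def by blast
qed

lemma weyl_numerator_periodic: "weyl_numerator \<tau> t a (z + 1) = weyl_numerator \<tau> t a z"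
proof -
  have "exp (c * (z + 1)) = exp (c * z)" if "exp c = 1" for c
    using that by (simp add: distrib_left exp_add)
  from this[of "2*pi*\<i>"] this[of "-(2*pi*\<i>)"] show ?thesis
    by (simp add: weyl_numerator_def exp_minus)
qed

context
  fixes \<tau> :: complex and t :: real and a :: "nat \<Rightarrow> complex"
  assumes Im_pos: "Im \<tau> > 0" and t_pos: "t > 0" and distr: "ad_inv_distribution a"
begin

lemma summable_ctau_powser: "summable (\<lambda>n. ctau_coeff \<tau> t a n * w ^ n)"
proof -
  obtain B N where "\<And>n. norm (ctau_coeff \<tau> t a n)
      \<le> B * (1 + real n ^ 2) ^ N * exp (- (pi * Im \<tau> * t / 2) * real n ^ 2)"
    using norm_ctau_coeff_le[OF distr] by blast
  moreover have "pi * Im \<tau> * t / 2 > 0"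
    using Im_pos t_pos by simp
  ultimately show ?thesis
    using summable_powser_gaussian_coeffs by blast
qed

lemma ctau_powser_holomorphic: "ctau_powser \<tau> t a holomorphic_on UNIV"
proof -
  have "(ctau_powser \<tau> t a has_field_derivative (\<Sum>n. diffs (ctau_coeff \<tau> t a) n * z ^ n)) (at z)" for z
    unfolding ctau_powser_def
    by (rule termdiffs_strong'[where K = "norm z + 1"]) (use summable_ctau_powser in auto)
  then show ?thesis
    unfolding holomorphic_on_def field_differentiable_def
    using has_field_derivative_at_within by blast
qed

lemma weyl_numerator_holomorphic: "weyl_numerator \<tau> t a holomorphic_on UNIV"
proof -
  have "(\<lambda>z. ctau_powser \<tau> t a (exp (c * z))) holomorphic_on UNIV" for c
    using holomorphic_on_compose[of "\<lambda>z. exp (c * z)" UNIV "ctau_powser \<tau> t a"] ctau_powser_holomorphic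
    by (auto simp: o_def intro: holomorphic_on_subset holomorphic_intros)
  from this[of "2*pi*\<i>"] this[of "-(2*pi*\<i>)"] show ?thesis
    unfolding weyl_numerator_def by (intro holomorphic_intros) simp_all
qed

lemma sigma_mult_Ctau_dmat: "sigma z * Ctau \<tau> t a (dmat z) = weyl_numerator \<tau> t a z"
proof -
  define q where "q = exp (2*pi*\<i>*z)"
  define p where "p = exp (-(2*pi*\<i>*z))"
  let ?b = "ctau_coeff \<tau> t a"
  define x where "x m = a m * exp (\<i> * pi * \<tau> * t * cm m) * chi m (dmat z)" for m
  have "q * p = 1"
    unfolding q_def p_def by (simp add: exp_minus)
  then have chi: "(q - p) * chi m (dmat z) = q ^ Suc m - p ^ Suc m" for m
    by (intro chi_Weyl_formula) (simp add: mtrace_dmat q_def p_def)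
  have shifted: "(\<lambda>m. ?b (Suc m) * w ^ Suc m) sums ctau_powser \<tau> t a w" for w
    using sums_Suc_iff[of "\<lambda>n. ?b n * w ^ n"] summable_sums[OF summable_ctau_powser]
    by (simp add: ctau_powser_def ctau_coeff_def)
  have terms: "?b (Suc m) * q ^ Suc m - ?b (Suc m) * p ^ Suc m = (q - p) * x m" for m
  proof -
    have "?b (Suc m) * q ^ Suc m - ?b (Suc m) * p ^ Suc m = ?b (Suc m) * ((q - p) * chi m (dmat z))"
      by (simp only: chi right_diff_distrib)
    then show ?thesis
      by (simp add: x_def ctau_coeff_def mult_ac)
  qed
  have sums: "(\<lambda>m. (q - p) * x m) sums weyl_numerator \<tau> t a z"
    using sums_diff[OF shifted[of q] shifted[of p]] unfolding terms
    by (simp add: weyl_numerator_def q_def p_def)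
  have sigma: "sigma z = q - p"
    by (simp add: sigma_def q_def p_def)
  show ?thesis
  proof (cases "q = p")
    case True
    then show ?thesis
      using sums sigma by (simp add: sums_iff)
  next
    case False
    then have "x sums (weyl_numerator \<tau> t a z / (q - p))"
      using sums_mult_D[OF sums] by simp
    then show ?thesis
      using False by (simp add: sigma Ctau_def x_def[symmetric] sums_iff)
  qed
qed

lemma weyl_numerator_eq_0_imp_coeffs_eq_0:
  assumes zero: "\<And>z. weyl_numerator \<tau> t a z = 0"
  shows "a m = 0"
proof -
  let ?P = "ctau_powser \<tau> t a"
  have "?P (inverse q) = ?P q" if "q \<noteq> 0" for q
    using zero[of "Ln q / (2*pi*\<i>)"] that by (simp add: weyl_numerator_def exp_minus)
  then have "?P w = ?P 0" for w
    by (rule entire_inversion_invariant_imp_const[OF ctau_powser_holomorphic])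
  also have "?P 0 = 0"
    by (simp add: ctau_powser_def ctau_coeff_def)
  finally have "(\<lambda>n. ctau_coeff \<tau> t a n * w ^ n) sums 0" for w
    using summable_sums[OF summable_ctau_powser] by (simp add: ctau_powser_def)
  then have "ctau_coeff \<tau> t a (Suc m) = 0"
    by (rule powser_eq_0_imp_coeff_eq_0)
  then show ?thesis
    by (simp add: ctau_coeff_def)
qed

end

theorem lemma5p14:
  fixes \<tau> :: complex and t :: real and a :: "nat \<Rightarrow> complex"
  assumes "Im \<tau> > 0" and "t > 0"
    and "\<not> (\<exists>n::nat. n > 0 \<and> 2 / t = real n)"
    and "ad_inv_distribution a"
    and "\<forall>z. (cmod (Ctau \<tau> t a (dmat (z + \<tau>))))^2 * (cmod (sigma (z + \<tau>)))^2
                 * exp (- (4*pi / (t * Im \<tau>)) * (Im (z + \<tau>))^2)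
            = (cmod (Ctau \<tau> t a (dmat z)))^2 * (cmod (sigma z))^2
                 * exp (- (4*pi / (t * Im \<tau>)) * (Im z)^2)"
  shows "\<forall>m. a m = 0"
proof -
  define F where "F = weyl_numerator \<tau> t a"
  define k where "k = 4*pi / (t * Im \<tau>)"
  have F: "F holomorphic_on UNIV"
    unfolding F_def using weyl_numerator_holomorphic[OF assms(1,2,4)] .
  have "norm (F (z + \<tau>))^2 * exp (- k * Im (z + \<tau>)^2) = norm (F z)^2 * exp (- k * Im z ^ 2)" for z
    using assms(5) unfolding F_def k_def sigma_mult_Ctau_dmat[OF assms(1,2,4), symmetric]
    by (simp add: norm_mult power_mult_distrib mult_ac)
  then obtain c where
    "\<And>z. F (z + \<tau>) = c * (F z * exp (- (\<i> * of_real (k * Im \<tau>)) * z + of_real (k * Im \<tau> ^ 2 / 2)))"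
    using entire_gaussian_invariant_imp_quasiperiodic[OF F] by blast
  moreover have "k * Im \<tau> = 4 * pi / t"
    using assms(1) by (simp add: k_def)
  ultimately have "F z = 0" for z
    using periodic_quasiperiodic_eq_0 weyl_numerator_periodic exp_4pi_div_ne_1[OF assms(2,3)]
    unfolding F_def by metis
  then show ?thesis
    using weyl_numerator_eq_0_imp_coeffs_eq_0[OF assms(1,2,4)] unfolding F_def by blast
qed

end
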